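(* Let $\mathcal{B}=\langle V,F,E\rangle$ be a finite bipartite graph and let $W\subseteq V$ be such that the subgraph of $\mathcal{B}$ induced by $(V\setminus W)\cup F$ is self-contained. Then Algorithm 1 (causal ordering via minimal self-contained sets) applied to $(W,\mathcal{B})$ is well-defined, i.e. every run of it can be carried out to completion (at every iteration of the loop the current graph possesses a minimal self-contained set), and its output directed cluster graph is unique, i.e. it does not depend on which minimal self-contained sets are chosen during the run.
   Context: A bipartite graph $\mathcal{B}=\langle V,F,E\rangle$ has disjoint vertex sets $V$ (variable vertices) and $F$ (constraint vertices) and undirected edges $(v-f)$ with $v\in V$, $f\in F$. For $X\subseteq V\cup F$, $\mathrm{adj}_{\mathcal{B}}(X)$ is the set of vertices adjacent in $\mathcal{B}$ to some vertex of $X$. A set $F'\subseteq F$ is self-contained (in $\mathcal{B}$) if $|F'|=|\mathrm{adj}_{\mathcal{B}}(F')|$ and $|F''|\le|\mathrm{adj}_{\mathcal{B}}(F'')|$ for all $F''\subseteq F'$. The graph $\mathcal{B}$ is self-contained if $|F|=|V|$ and $F$ is self-contained. A non-empty self-contained set is minimal self-contained if none of its non-empty strict subsets is self-contained. A directed cluster graph is a pair $\langle\mathcal{V},\mathcal{E}\rangle$ where $\mathcal{V}$ is a partition of a vertex set and $\mathcal{E}$ is a set of directed edges $x\to C$ from vertices $x$ to clusters $C\in\mathcal{V}$. Algorithm 1. Input: $W$ and $\mathcal{B}$ as in the claim. Initialize $\mathcal{E}=\emptyset$, $\mathcal{V}=\{\{w\}:w\in W\}$, and $\mathcal{B}'=\langle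 V',F',E'\rangle$ the subgraph of $\mathcal{B}$ induced by $(V\setminus W)\cup F$. While $\mathcal{B}'$ is not the null graph: choose a minimal self-contained set $S_F\subseteq F'$ of $\mathcal{B}'$; let $C=S_F\cup\mathrm{adj}_{\mathcal{B}'}(S_F)$; add $C$ to $\mathcal{V}$; for every $v\in\mathrm{adj}_{\mathcal{B}}(S_F)\setminus\mathrm{adj}_{\mathcal{B}'}(S_F)$ add the edge $v\to C$ to $\mathcal{E}$; replace $\mathcal{B}'$ by its subgraph induced by $(V'\cup F')\setminus C$. Output: the directed cluster graph $\langle\mathcal{V},\mathcal{E}\rangle$ (the causal ordering graph). *)

theory Defs
  imports Main
begin

definition bipartite_graph :: "'a set \<Rightarrow> 'a set \<Rightarrow> ('a \<times> 'a) set \<Rightarrow> bool" where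
  "bipartite_graph V F E \<longleftrightarrow> V \<inter> F = {} \<and> E \<subseteq> V \<times> F"

definition finite_bipartite_graph :: "'a set \<Rightarrow> 'a set \<Rightarrow> ('a \<times> 'a) set \<Rightarrow> bool" where
  "finite_bipartite_graph V F E \<longleftrightarrow> bipartite_graph V F E \<and> finite V \<and> finite F"

definition adj :: "('a \<times> 'a) set \<Rightarrow> 'a set \<Rightarrow> 'a set" where
  "adj E X = {v. \<exists>f\<in>X. (v, f) \<in> E} \<union> {f. \<exists>v\<in>X. (v, f) \<in> E}"

definition induced_edges :: "('a \<times> 'a) set \<Rightarrow> 'a set \<Rightarrow> ('a \<times> 'a) set" where
  "induced_edges E X = E \<inter> (X \<times> X)"

definition self_contained_set :: "'a set \<Rightarrow> 'a set \<Rightarrow> ('a \<times> 'a) set \<Rightarrow> 'a set \<Rightarrow> bool" where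
  "self_contained_set V F E F' \<longleftrightarrow>
     F' \<subseteq> F \<and> card F' = card (adj E F') \<and> (\<forall>F''. F'' \<subseteq> F' \<longrightarrow> card F'' \<le> card (adj E F''))"

definition self_contained_graph :: "'a set \<Rightarrow> 'a set \<Rightarrow> ('a \<times> 'a) set \<Rightarrow> bool" where
  "self_contained_graph V F E \<longleftrightarrow> card F = card V \<and> self_contained_set V F E F"

definition minimal_self_contained :: "'a set \<Rightarrow> 'a set \<Rightarrow> ('a \<times> 'a) set \<Rightarrow> 'a set \<Rightarrow> bool" where
  "minimal_self_contained V F E S \<longleftrightarrow>
     S \<noteq> {} \<and> self_contained_set V F E S \<and>
     (\<forall>S'. S' \<noteq> {} \<and> S' \<subset> S \<longrightarrow> \<not> self_contained_set V F E S')"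

text \<open>State of Algorithm 1: (V', F', clusters \<V>, edges \<E>). The current graph B' is the
subgraph of B induced by V' \<union> F'. A directed edge x \<rightarrow> C is the pair (x, C).\<close>
type_synonym 'a alg_state = "'a set \<times> 'a set \<times> 'a set set \<times> ('a \<times> 'a set) set"

definition alg_init :: "'a set \<Rightarrow> 'a set \<Rightarrow> 'a set \<Rightarrow> 'a alg_state" where
  "alg_init W V F = (V - W, F, (\<lambda>w. {w}) ` W, {})"

definition alg_step_with :: "('a \<times> 'a) set \<Rightarrow> 'a set \<Rightarrow> 'a alg_state \<Rightarrow> 'a alg_state \<Rightarrow> bool" where
  "alg_step_with E S s s' \<longleftrightarrow>
     (case s of (V', F', Cl, Ed) \<Rightarrow>
       (let E' = induced_edges E (V' \<union> F');
            C = S \<union> adj E' S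
        in minimal_self_contained V' F' E' S \<and>
           s' = (V' - C, F' - C, insert C Cl,
                 Ed \<union> {(v, C) | v. v \<in> adj E S - adj E' S})))"

definition alg_step :: "('a \<times> 'a) set \<Rightarrow> 'a alg_state \<Rightarrow> 'a alg_state \<Rightarrow> bool" where
  "alg_step E s s' \<longleftrightarrow> (\<exists>S. alg_step_with E S s s')"

definition alg_final :: "'a alg_state \<Rightarrow> bool" where
  "alg_final s \<longleftrightarrow> (case s of (V', F', _, _) \<Rightarrow> V' \<union> F' = {})"

definition alg_output :: "'a alg_state \<Rightarrow> 'a set set \<times> ('a \<times> 'a set) set" where
  "alg_output s = (case s of (_, _, Cl, Ed) \<Rightarrow> (Cl, Ed))"

end

theory Submission
  imports Defs
begin

text \<open>
  For a constraint set \<open>T\<close> of the current graph \<open>B'\<close> let \<open>N(T)\<close> be its set of neighbouring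
  variables. \<open>B'\<close> is self-contained iff \<open>|F'| = |V'|\<close> and Hall's condition \<open>|T| \<le> |N(T)|\<close> holds;
  then the self-contained sets are exactly the tight sets \<open>|N(S)| = |S|\<close>. By submodularity of
  \<open>|N(-)|\<close>, tight sets are closed under intersection, so two different minimal ones are
  disjoint and have disjoint neighbourhoods. Removing a tight set \<open>S\<close> together with \<open>N(S)\<close>
  keeps \<open>B'\<close> self-contained, so a minimal self-contained set exists as long as \<open>B'\<close> is
  non-empty, and the number of constraints strictly decreases. Two different minimal sets
  \<open>S\<^sub>1, S\<^sub>2\<close> stay minimal after removing the other one, and processing them in either order
  yields the same clusters and edges. A terminating relation with this one-step diamond
  property has unique normal forms.
\<close>

definition nbrs :: "('a \<times> 'b) set \<Rightarrow> 'a set \<Rightarrow> 'b set \<Rightarrow> 'a set" where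
  "nbrs E V' T = {v \<in> V'. \<exists>f\<in>T. (v, f) \<in> E}"

definition hall_condition :: "('a \<times> 'b) set \<Rightarrow> 'a set \<Rightarrow> 'b set \<Rightarrow> bool" where
  "hall_condition E V' F' \<longleftrightarrow> (\<forall>T\<subseteq>F'. card T \<le> card (nbrs E V' T))"

definition tight :: "('a \<times> 'b) set \<Rightarrow> 'a set \<Rightarrow> 'b set \<Rightarrow> bool" where
  "tight E V' T \<longleftrightarrow> card T = card (nbrs E V' T)"

lemma nbrs_subset: "nbrs E V' T \<subseteq> V'"
  unfolding nbrs_def by blast

lemma nbrs_mono: "T \<subseteq> S \<Longrightarrow> nbrs E V' T \<subseteq> nbrs E V' S"
  unfolding nbrs_def by blast

lemma nbrs_Un: "nbrs E V' (A \<union> B) = nbrs E V' A \<union> nbrs E V' B"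
  unfolding nbrs_def by blast

lemma nbrs_Diff: "nbrs E (V' - X) T = nbrs E V' T - X"
  unfolding nbrs_def by blast

lemma nbrs_empty [simp]: "nbrs E V' {} = {}"
  unfolding nbrs_def by blast

lemma finite_nbrs: "finite V' \<Longrightarrow> finite (nbrs E V' T)"
  using nbrs_subset finite_subset by metis

lemma tight_if_card_eq:
  assumes "finite V'" "hall_condition E V' F'" "card F' = card V'"
  shows "tight E V' F'"
proof -
  have "card F' \<le> card (nbrs E V' F')"
    using assms(2) unfolding hall_condition_def by simp
  moreover have "card (nbrs E V' F') \<le> card V'"
    using assms(1) nbrs_subset by (rule card_mono)
  ultimately show ?thesis
    using assms(3) unfolding tight_def by simp
qed

text \<open>Submodularity of \<open>card \<circ> nbrs E V'\<close> against Hall's condition: every inequality in the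
  chain below is forced to be an equality.\<close>

lemma tight_Int:
  assumes "finite V'" "finite F'" "hall_condition E V' F'"
    and "A \<subseteq> F'" "B \<subseteq> F'" "tight E V' A" "tight E V' B"
  shows "tight E V' (A \<inter> B)" and "nbrs E V' (A \<inter> B) = nbrs E V' A \<inter> nbrs E V' B"
proof -
  let ?N = "nbrs E V'"
  have fin: "finite A" "finite B" "finite (?N A)" "finite (?N B)"
    using assms(1,2,4,5) finite_subset finite_nbrs by blast+
  have sub: "?N (A \<inter> B) \<subseteq> ?N A \<inter> ?N B"
    by (simp add: nbrs_mono)
  have "A \<union> B \<subseteq> F'"
    using assms(4,5) by simp
  then have hall_Un: "card (A \<union> B) \<le> card (?N A \<union> ?N B)"
    using assms(3) unfolding hall_condition_def nbrs_Un[symmetric] by blast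
  have hall_Int: "card (A \<inter> B) \<le> card (?N (A \<inter> B))"
    using assms(3,4) unfolding hall_condition_def by (simp add: le_infI1)
  have card_sub: "card (?N (A \<inter> B)) \<le> card (?N A \<inter> ?N B)"
    using sub fin by (simp add: card_mono)
  have "card (A \<union> B) + card (A \<inter> B) = card A + card B"
    using card_Un_Int[OF fin(1,2)] by simp
  also have "\<dots> = card (?N A) + card (?N B)"
    using assms(6,7) unfolding tight_def by simp
  also have "\<dots> = card (?N A \<union> ?N B) + card (?N A \<inter> ?N B)"
    using card_Un_Int[OF fin(3,4)] .
  finally have "card (A \<union> B) + card (A \<inter> B) = card (?N A \<union> ?N B) + card (?N A \<inter> ?N B)" .
  with hall_Un hall_Int card_sub
  have "card (A \<inter> B) = card (?N (A \<inter> B))" "card (?N (A \<inter> B)) = card (?N A \<inter> ?N B)"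
    by linarith+
  then show "tight E V' (A \<inter> B)" "?N (A \<inter> B) = ?N A \<inter> ?N B"
    unfolding tight_def using card_subset_eq[OF _ sub] fin by auto
qed

definition minimal_tight :: "('a \<times> 'b) set \<Rightarrow> 'a set \<Rightarrow> 'b set \<Rightarrow> 'b set \<Rightarrow> bool" where
  "minimal_tight E V' F' S \<longleftrightarrow>
     S \<noteq> {} \<and> S \<subseteq> F' \<and> tight E V' S \<and> (\<forall>S'. S' \<noteq> {} \<and> S' \<subset> S \<longrightarrow> \<not> tight E V' S')"

lemma ex_minimal_tight:
  assumes "finite F'" "F' \<noteq> {}" "tight E V' F'"
  shows "\<exists>S. minimal_tight E V' F' S"
proof -
  define \<T> where "\<T> = {S. S \<noteq> {} \<and> S \<subseteq> F' \<and> tight E V' S}"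
  have "finite \<T>"
    using assms(1) unfolding \<T>_def by (simp add: finite_subset[of _ "Pow F'"] subset_eq)
  moreover have "F' \<in> \<T>"
    using assms unfolding \<T>_def by simp
  ultimately obtain S where "S \<in> \<T>" "\<forall>S'\<in>\<T>. S' \<le> S \<longrightarrow> S = S'"
    using finite_has_minimal2[of \<T> F'] by blast
  then have "minimal_tight E V' F' S"
    unfolding minimal_tight_def \<T>_def by auto
  then show ?thesis ..
qed

lemma minimal_tight_disjoint:
  assumes "finite V'" "finite F'" "hall_condition E V' F'"
    and A: "minimal_tight E V' F' A" and B: "minimal_tight E V' F' B" and "A \<noteq> B"
  shows "A \<inter> B = {}" and "nbrs E V' A \<inter> nbrs E V' B = {}"
proof -
  have "A \<subseteq> F'" "B \<subseteq> F'" "tight E V' A" "tight E V' B"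
    using A B unfolding minimal_tight_def by simp_all
  note Int = tight_Int[OF assms(1-3) this]
  show "A \<inter> B = {}"
  proof (rule ccontr)
    assume "A \<inter> B \<noteq> {}"
    moreover have "A \<inter> B \<subset> A \<or> A \<inter> B \<subset> B"
      using \<open>A \<noteq> B\<close> by blast
    ultimately show False
      using A B Int(1) unfolding minimal_tight_def by metis
  qed
  then show "nbrs E V' A \<inter> nbrs E V' B = {}"
    using Int(2) by simp
qed

lemma hall_condition_Diff_tight:
  assumes "finite V'" "finite F'" "hall_condition E V' F'" "S \<subseteq> F'" "tight E V' S"
  shows "hall_condition E (V' - nbrs E V' S) (F' - S)"
  unfolding hall_condition_def
proof (intro allI impI)
  fix T assume T: "T \<subseteq> F' - S"
  let ?N = "nbrs E V'"
  have fin: "finite S" "finite T" "finite (?N S)" "finite (?N T - ?N S)"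
    using finite_subset[OF assms(4,2)] finite_subset[OF _ assms(2), of T] T finite_nbrs[OF assms(1)]
    by auto
  have "S \<union> T \<subseteq> F'"
    using assms(4) T by blast
  then have "card (S \<union> T) \<le> card (?N (S \<union> T))"
    using assms(3) unfolding hall_condition_def by simp
  moreover have "card (S \<union> T) = card S + card T"
    using T fin by (intro card_Un_disjoint) auto
  moreover have "?N (S \<union> T) = ?N S \<union> (?N T - ?N S)"
    by (auto simp: nbrs_Un)
  then have "card (?N (S \<union> T)) = card (?N S) + card (?N T - ?N S)"
    using fin by (simp only: card_Un_disjoint Diff_disjoint)
  ultimately show "card T \<le> card (nbrs E (V' - ?N S) T)"
    using assms(5) unfolding tight_def nbrs_Diff by simp
qed

lemma minimal_tight_Diff:
  assumes "minimal_tight E V' F' S" "nbrs E V' S \<inter> X = {}" "S \<inter> Y = {}"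
  shows "minimal_tight E (V' - X) (F' - Y) S"
proof -
  have "tight E (V' - X) T \<longleftrightarrow> tight E V' T" if "T \<subseteq> S" for T
  proof -
    have "nbrs E V' T - X = nbrs E V' T"
      using nbrs_mono[OF that, of E V'] assms(2) by blast
    then show ?thesis
      unfolding tight_def nbrs_Diff by simp
  qed
  moreover have "S \<subseteq> F' - Y"
    using assms(1,3) unfolding minimal_tight_def by blast
  ultimately show ?thesis
    using assms(1) unfolding minimal_tight_def by (simp add: less_le_not_le)
qed

lemma reaches_normal_form:
  assumes step: "\<And>s t. P s \<Longrightarrow> R s t \<Longrightarrow> P t \<and> m t < (m s :: nat)" and "P s"
  shows "\<exists>t. R\<^sup>*\<^sup>* s t \<and> (\<nexists>u. R t u)"
  using \<open>P s\<close>
proof (induction "m s" arbitrary: s rule: less_induct)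
  case less
  show ?case
  proof (cases "\<exists>u. R s u")
    case True
    then obtain u where "R s u" ..
    with less.prems step have "P u" "m u < m s"
      by blast+
    then obtain t where "R\<^sup>*\<^sup>* u t" "\<nexists>v. R t v"
      using less.hyps by blast
    with \<open>R s u\<close> show ?thesis
      by (meson converse_rtranclp_into_rtranclp)
  qed blast
qed

text \<open>Newman's lemma, in the easy case of a one-step diamond.\<close>

lemma normal_form_unique:
  assumes step: "\<And>s t. P s \<Longrightarrow> R s t \<Longrightarrow> P t \<and> m t < (m s :: nat)"
    and diamond: "\<And>s t\<^sub>1 t\<^sub>2. P s \<Longrightarrow> R s t\<^sub>1 \<Longrightarrow> R s t\<^sub>2 \<Longrightarrow> t\<^sub>1 \<noteq> t\<^sub>2 \<Longrightarrow> \<exists>u. R t\<^sub>1 u \<and> R t\<^sub>2 u"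
    and "P s" "R\<^sup>*\<^sup>* s t\<^sub>1" "\<nexists>u. R t\<^sub>1 u" "R\<^sup>*\<^sup>* s t\<^sub>2" "\<nexists>u. R t\<^sub>2 u"
  shows "t\<^sub>1 = t\<^sub>2"
  using assms(3-)
proof (induction "m s" arbitrary: s t\<^sub>1 t\<^sub>2 rule: less_induct)
  case less
  show ?case
  proof (cases "\<exists>u. R s u")
    case False
    then show ?thesis
      using less.prems by (metis converse_rtranclpE)
  next
    case True
    have first_step: "\<exists>s'. R s s' \<and> R\<^sup>*\<^sup>* s' t" if "R\<^sup>*\<^sup>* s t" "\<nexists>u. R t u" for t
      using that True by (metis converse_rtranclpE)
    obtain s\<^sub>1 where s\<^sub>1: "R s s\<^sub>1" "R\<^sup>*\<^sup>* s\<^sub>1 t\<^sub>1"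
      using first_step less.prems(2,3) by blast
    obtain s\<^sub>2 where s\<^sub>2: "R s s\<^sub>2" "R\<^sup>*\<^sup>* s\<^sub>2 t\<^sub>2"
      using first_step less.prems(4,5) by blast
    have P\<^sub>1: "P s\<^sub>1" "m s\<^sub>1 < m s" and P\<^sub>2: "P s\<^sub>2" "m s\<^sub>2 < m s"
      using step less.prems(1) s\<^sub>1(1) s\<^sub>2(1) by blast+
    show ?thesis
    proof (cases "s\<^sub>1 = s\<^sub>2")
      case True
      with s\<^sub>2(2) have "R\<^sup>*\<^sup>* s\<^sub>1 t\<^sub>2"
        by simp
      then show ?thesis
        by (rule less.hyps[OF P\<^sub>1(2) P\<^sub>1(1) s\<^sub>1(2) less.prems(3) _ less.prems(5)])
    next
      case False
      then obtain u where u: "R s\<^sub>1 u" "R s\<^sub>2 u"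
        using diamond[OF less.prems(1) s\<^sub>1(1) s\<^sub>2(1)] by blast
      have "P u"
        using step[OF P\<^sub>1(1) u(1)] ..
      then obtain t where t: "R\<^sup>*\<^sup>* u t" "\<nexists>v. R t v"
        using reaches_normal_form[of P R m, OF step] by blast
      have "t\<^sub>1 = t"
        using less.hyps[OF P\<^sub>1(2) P\<^sub>1(1) s\<^sub>1(2) less.prems(3)] u(1) t
        by (meson converse_rtranclp_into_rtranclp)
      moreover have "t\<^sub>2 = t"
        using less.hyps[OF P\<^sub>2(2) P\<^sub>2(1) s\<^sub>2(2) less.prems(5)] u(2) t
        by (meson converse_rtranclp_into_rtranclp)
      ultimately show ?thesis
        by simp
    qed
  qed
qed

fun cluster_step :: "('a \<times> 'a) set \<Rightarrow> 'a set \<Rightarrow> 'a alg_state \<Rightarrow> 'a alg_state" where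
  "cluster_step E S (V', F', Cl, Ed) =
     (let N = nbrs E V' S; C = S \<union> N
      in (V' - N, F' - S, insert C Cl, Ed \<union> {(v, C) | v. v \<in> adj E S - N}))"

lemma cluster_step_commute:
  assumes "nbrs E V' S\<^sub>1 \<inter> nbrs E V' S\<^sub>2 = {}"
  shows "cluster_step E S\<^sub>2 (cluster_step E S\<^sub>1 (V', F', Cl, Ed)) =
         cluster_step E S\<^sub>1 (cluster_step E S\<^sub>2 (V', F', Cl, Ed))"
proof -
  have "nbrs E (V' - nbrs E V' S\<^sub>1) S\<^sub>2 = nbrs E V' S\<^sub>2"
    and "nbrs E (V' - nbrs E V' S\<^sub>2) S\<^sub>1 = nbrs E V' S\<^sub>1"
    using assms unfolding nbrs_Diff by blast+
  then show ?thesis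
    by (simp add: Let_def insert_commute Un_ac Diff_eq Int_ac)
qed

locale causal_ordering =
  fixes V F :: "'a set" and E :: "('a \<times> 'a) set"
  assumes finite_bipartite: "finite_bipartite_graph V F E"
begin

lemma finite_V: "finite V" and finite_F: "finite F"
  and disjoint_V_F: "V \<inter> F = {}" and edges_subset: "E \<subseteq> V \<times> F"
  using finite_bipartite unfolding finite_bipartite_graph_def bipartite_graph_def by auto

lemma adj_induced_edges:
  assumes "V' \<subseteq> V" "F' \<subseteq> F" "T \<subseteq> F'"
  shows "adj (induced_edges E (V' \<union> F')) T = nbrs E V' T"
  using assms edges_subset disjoint_V_F unfolding adj_def induced_edges_def nbrs_def by blast

lemma self_contained_set_iff_tight:
  assumes "V' \<subseteq> V" "F' \<subseteq> F" "hall_condition E V' F'"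
  shows "self_contained_set V' F' (induced_edges E (V' \<union> F')) S \<longleftrightarrow> S \<subseteq> F' \<and> tight E V' S"
proof (cases "S \<subseteq> F'")
  case True
  then have "\<forall>T. T \<subseteq> S \<longrightarrow> adj (induced_edges E (V' \<union> F')) T = nbrs E V' T \<and> T \<subseteq> F'"
    using adj_induced_edges[OF assms(1,2)] by auto
  with True show ?thesis
    using assms(3) unfolding self_contained_set_def hall_condition_def tight_def by simp
qed (simp add: self_contained_set_def)

lemma minimal_self_contained_iff_minimal_tight:
  assumes "V' \<subseteq> V" "F' \<subseteq> F" "hall_condition E V' F'"
  shows "minimal_self_contained V' F' (induced_edges E (V' \<union> F')) S \<longleftrightarrow> minimal_tight E V' F' S"
  unfolding minimal_self_contained_def minimal_tight_def self_contained_set_iff_tight[OF assms]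
  by (auto dest: psubset_imp_subset)

lemma self_contained_graph_iff_hall_condition:
  assumes "V' \<subseteq> V" "F' \<subseteq> F"
  shows "self_contained_graph V' F' (induced_edges E (V' \<union> F')) \<longleftrightarrow>
         card F' = card V' \<and> hall_condition E V' F'"
proof -
  have "\<forall>T. T \<subseteq> F' \<longrightarrow> adj (induced_edges E (V' \<union> F')) T = nbrs E V' T"
    using adj_induced_edges[OF assms] by blast
  moreover have "finite V'"
    using assms(1) finite_V finite_subset by blast
  ultimately show ?thesis
    using tight_if_card_eq[of V' E F']
    unfolding self_contained_graph_def self_contained_set_def hall_condition_def tight_def
    by auto
qed

definition self_contained_state :: "'a alg_state \<Rightarrow> bool" where
  "self_contained_state = (\<lambda>(V', F', _).
     V' \<subseteq> V \<and> F' \<subseteq> F \<and> self_contained_graph V' F' (induced_edges E (V' \<union> F')))"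

lemma self_contained_stateD:
  assumes "self_contained_state (V', F', Cl, Ed)"
  shows "V' \<subseteq> V" "F' \<subseteq> F" "finite V'" "finite F'" "card F' = card V'" "hall_condition E V' F'"
  using assms self_contained_graph_iff_hall_condition finite_V finite_F finite_subset
  unfolding self_contained_state_def by auto

lemma alg_step_with_iff:
  assumes "self_contained_state (V', F', Cl, Ed)"
  shows "alg_step_with E S (V', F', Cl, Ed) s' \<longleftrightarrow>
         minimal_tight E V' F' S \<and> s' = cluster_step E S (V', F', Cl, Ed)"
proof -
  note V'F' = self_contained_stateD[OF assms]
  note minimal_iff = minimal_self_contained_iff_minimal_tight[OF V'F'(1,2,6)]
  show ?thesis
  proof (cases "S \<subseteq> F'")
    case True
    let ?N = "nbrs E V' S"
    have adj: "adj (induced_edges E (V' \<union> F')) S = ?N"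
      using adj_induced_edges[OF V'F'(1,2) True] .
    have "V' - (S \<union> ?N) = V' - ?N"
      using True V'F'(1,2) disjoint_V_F by blast
    moreover have "F' - (S \<union> ?N) = F' - S"
      using nbrs_subset[of E V' S] V'F'(1,2) disjoint_V_F by blast
    ultimately show ?thesis
      by (simp add: alg_step_with_def Let_def adj minimal_iff)
  next
    case False
    then show ?thesis
      by (simp add: alg_step_with_def Let_def minimal_iff minimal_tight_def)
  qed
qed

lemma cluster_step_self_contained_state:
  assumes "self_contained_state (V', F', Cl, Ed)" "minimal_tight E V' F' S"
  shows "self_contained_state (cluster_step E S (V', F', Cl, Ed))"
    and "card (F' - S) < card F'"
proof -
  note V'F' = self_contained_stateD[OF assms(1)]
  let ?N = "nbrs E V' S"
  have S: "S \<noteq> {}" "S \<subseteq> F'" "tight E V' S"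
    using assms(2) unfolding minimal_tight_def by simp_all
  have "finite S"
    using S(2) V'F'(4) finite_subset by blast
  then have "card (F' - S) = card F' - card S"
    using S(2) by (rule card_Diff_subset)
  moreover have "card (V' - ?N) = card V' - card ?N"
    using finite_nbrs[OF V'F'(3)] nbrs_subset by (rule card_Diff_subset)
  moreover have "hall_condition E (V' - ?N) (F' - S)"
    using hall_condition_Diff_tight[OF V'F'(3,4,6) S(2,3)] .
  ultimately have "self_contained_graph (V' - ?N) (F' - S) (induced_edges E ((V' - ?N) \<union> (F' - S)))"
    using self_contained_graph_iff_hall_condition V'F'(1,2,5) S(3) unfolding tight_def
    by (metis Diff_subset subset_trans)
  then show "self_contained_state (cluster_step E S (V', F', Cl, Ed))"
    using V'F'(1,2) unfolding self_contained_state_def by (auto simp: Let_def)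
  show "card (F' - S) < card F'"
    using S(1,2) V'F'(4) by (intro psubset_card_mono) auto
qed

lemma alg_step_invariant_decreasing:
  assumes "self_contained_state s" "alg_step E s t"
  shows "self_contained_state t \<and> card (fst (snd t)) < card (fst (snd s))"
proof -
  obtain V' F' Cl Ed where s: "s = (V', F', Cl, Ed)"
    by (cases s)
  with assms obtain S where "minimal_tight E V' F' S" "t = cluster_step E S s"
    unfolding alg_step_def using alg_step_with_iff by blast
  then show ?thesis
    using cluster_step_self_contained_state assms(1) unfolding s by (simp add: Let_def)
qed

lemma ex_minimal_self_contained:
  assumes "self_contained_state (V', F', Cl, Ed)" "V' \<union> F' \<noteq> {}"
  shows "\<exists>S. minimal_self_contained V' F' (induced_edges E (V' \<union> F')) S"
proof -
  note V'F' = self_contained_stateD[OF assms(1)]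
  have "F' \<noteq> {}"
    using assms(2) V'F'(3,5) by auto
  moreover have "tight E V' F'"
    using tight_if_card_eq[OF V'F'(3,6,5)] .
  ultimately show ?thesis
    using ex_minimal_tight[OF V'F'(4)] minimal_self_contained_iff_minimal_tight[OF V'F'(1,2,6)]
    by blast
qed

lemma alg_final_iff_no_step:
  assumes "self_contained_state s"
  shows "alg_final s \<longleftrightarrow> (\<nexists>t. alg_step E s t)"
proof -
  obtain V' F' Cl Ed where s: "s = (V', F', Cl, Ed)"
    by (cases s)
  have "alg_step E s t \<longleftrightarrow> (\<exists>S. minimal_tight E V' F' S \<and> t = cluster_step E S s)" for t
    unfolding alg_step_def s alg_step_with_iff[OF assms[unfolded s]] ..
  then have "(\<exists>t. alg_step E s t) \<longleftrightarrow> (\<exists>S. minimal_tight E V' F' S)"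
    by blast
  moreover have "(\<exists>S. minimal_tight E V' F' S) \<longleftrightarrow> V' \<union> F' \<noteq> {}"
  proof
    assume "\<exists>S. minimal_tight E V' F' S"
    then show "V' \<union> F' \<noteq> {}"
      unfolding minimal_tight_def by blast
  next
    assume "V' \<union> F' \<noteq> {}"
    then show "\<exists>S. minimal_tight E V' F' S"
      using ex_minimal_self_contained[OF assms[unfolded s]]
      unfolding minimal_self_contained_iff_minimal_tight[OF self_contained_stateD(1,2,6)[OF assms[unfolded s]]]
      by blast
  qed
  ultimately show ?thesis
    unfolding s alg_final_def by simp
qed

lemma alg_step_diamond:
  assumes "self_contained_state s" "alg_step E s t\<^sub>1" "alg_step E s t\<^sub>2" "t\<^sub>1 \<noteq> t\<^sub>2"
  shows "\<exists>u. alg_step E t\<^sub>1 u \<and> alg_step E t\<^sub>2 u"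
proof -
  obtain V' F' Cl Ed where s: "s = (V', F', Cl, Ed)"
    by (cases s)
  note V'F' = self_contained_stateD[OF assms(1)[unfolded s]]
  obtain S\<^sub>1 S\<^sub>2 where S\<^sub>1: "minimal_tight E V' F' S\<^sub>1" "t\<^sub>1 = cluster_step E S\<^sub>1 s"
    and S\<^sub>2: "minimal_tight E V' F' S\<^sub>2" "t\<^sub>2 = cluster_step E S\<^sub>2 s"
    using assms(2,3) unfolding alg_step_def s alg_step_with_iff[OF assms(1)[unfolded s]] by blast
  have "S\<^sub>1 \<noteq> S\<^sub>2"
    using S\<^sub>1(2) S\<^sub>2(2) assms(4) by blast
  note disjoint = minimal_tight_disjoint[OF V'F'(3,4,6) S\<^sub>1(1) S\<^sub>2(1) this]
  have step_after: "alg_step E (cluster_step E S s) (cluster_step E S' (cluster_step E S s))"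
    if "minimal_tight E V' F' S" "minimal_tight E V' F' S'"
      "S' \<inter> S = {}" "nbrs E V' S' \<inter> nbrs E V' S = {}" for S S'
  proof -
    obtain Cl' Ed' where s': "cluster_step E S s = (V' - nbrs E V' S, F' - S, Cl', Ed')"
      by (simp add: s Let_def)
    have "self_contained_state (cluster_step E S s)"
      using cluster_step_self_contained_state(1) assms(1) that(1) unfolding s .
    moreover have "minimal_tight E (V' - nbrs E V' S) (F' - S) S'"
      using minimal_tight_Diff[OF that(2,4,3)] .
    ultimately show ?thesis
      unfolding alg_step_def s' using alg_step_with_iff by blast
  qed
  have "alg_step E t\<^sub>1 (cluster_step E S\<^sub>2 t\<^sub>1)"
    using step_after[OF S\<^sub>1(1) S\<^sub>2(1)] disjoint S\<^sub>1(2) by (simp add: Int_commute)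
  moreover have "alg_step E t\<^sub>2 (cluster_step E S\<^sub>1 t\<^sub>2)"
    using step_after[OF S\<^sub>2(1) S\<^sub>1(1)] disjoint S\<^sub>2(2) by simp
  moreover have "cluster_step E S\<^sub>2 t\<^sub>1 = cluster_step E S\<^sub>1 t\<^sub>2"
    using cluster_step_commute[OF disjoint(2)] S\<^sub>1(2) S\<^sub>2(2) s by simp
  ultimately show ?thesis
    by metis
qed

lemma self_contained_state_alg_init:
  assumes "W \<subseteq> V" "self_contained_graph (V - W) F (induced_edges E ((V - W) \<union> F))"
  shows "self_contained_state (alg_init W V F)"
  using assms unfolding alg_init_def self_contained_state_def by simp

lemma self_contained_state_rtranclp:
  assumes "(alg_step E)\<^sup>*\<^sup>* s t" "self_contained_state s"
  shows "self_contained_state t"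
  using assms by (induction rule: rtranclp_induct) (auto dest: alg_step_invariant_decreasing)

lemma reaches_alg_final:
  assumes "self_contained_state s"
  shows "\<exists>t. (alg_step E)\<^sup>*\<^sup>* s t \<and> alg_final t"
proof -
  obtain t where t: "(alg_step E)\<^sup>*\<^sup>* s t" "\<nexists>u. alg_step E t u"
    using reaches_normal_form[where P = self_contained_state and R = "alg_step E"
        and m = "\<lambda>s. card (fst (snd s))", OF alg_step_invariant_decreasing assms]
    by blast
  moreover have "self_contained_state t"
    using self_contained_state_rtranclp[OF t(1) assms] .
  ultimately show ?thesis
    using alg_final_iff_no_step by blast
qed

lemma alg_final_unique:
  assumes "self_contained_state s"
    and "(alg_step E)\<^sup>*\<^sup>* s t\<^sub>1" "alg_final t\<^sub>1" "(alg_step E)\<^sup>*\<^sup>* s t\<^sub>2" "alg_final t\<^sub>2"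
  shows "t\<^sub>1 = t\<^sub>2"
proof (rule normal_form_unique[where P = self_contained_state and R = "alg_step E"
      and m = "\<lambda>s. card (fst (snd s))"])
  show "\<nexists>u. alg_step E t\<^sub>1 u" "\<nexists>u. alg_step E t\<^sub>2 u"
    using alg_final_iff_no_step self_contained_state_rtranclp assms by blast+
qed (use alg_step_invariant_decreasing alg_step_diamond assms in auto)

end

theorem theorem4:
  fixes V F W :: "'a set" and E :: "('a \<times> 'a) set"
  assumes "finite_bipartite_graph V F E"
    and "W \<subseteq> V"
    and "self_contained_graph (V - W) F (induced_edges E ((V - W) \<union> F))"
  shows "(\<forall>s. (alg_step E)\<^sup>*\<^sup>* (alg_init W V F) s \<longrightarrow>
            (case s of (V', F', _, _) \<Rightarrow>
               V' \<union> F' \<noteq> {} \<longrightarrow>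
               (\<exists>S. minimal_self_contained V' F' (induced_edges E (V' \<union> F')) S)))
       \<and> (\<forall>s. (alg_step E)\<^sup>*\<^sup>* (alg_init W V F) s \<longrightarrow>
            (\<exists>t. (alg_step E)\<^sup>*\<^sup>* s t \<and> alg_final t))
       \<and> (\<forall>s1 s2. (alg_step E)\<^sup>*\<^sup>* (alg_init W V F) s1 \<and> alg_final s1 \<and>
                  (alg_step E)\<^sup>*\<^sup>* (alg_init W V F) s2 \<and> alg_final s2 \<longrightarrow>
                  alg_output s1 = alg_output s2)"
proof -
  interpret causal_ordering V F E
    using assms(1) by unfold_locales
  have reachable: "self_contained_state s" if "(alg_step E)\<^sup>*\<^sup>* (alg_init W V F) s" for s
    using self_contained_state_rtranclp[OF that self_contained_state_alg_init[OF assms(2,3)]] .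
  have "case s of (V', F', _, _) \<Rightarrow>
          V' \<union> F' \<noteq> {} \<longrightarrow> (\<exists>S. minimal_self_contained V' F' (induced_edges E (V' \<union> F')) S)"
    if "(alg_step E)\<^sup>*\<^sup>* (alg_init W V F) s" for s
    using reachable[OF that] by (cases s) (simp add: ex_minimal_self_contained)
  then show ?thesis
    using reaches_alg_final reachable alg_final_unique[OF self_contained_state_alg_init[OF assms(2,3)]]
    by blast
qed

end
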